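(* Let $\Omega=\{\omega_1,\dots,\omega_K\}$ with $0<\omega_1<\dots<\omega_K$ and let $\mu^*$ be an aggregate market such that $\mu^*\in\mathcal{M}_r\cap\mathcal{M}_s$ for some $r<s$ (the monopolist is indifferent between charging $\omega_r$ and $\omega_s$ in $\mu^*$). Then for every cost level $k\ge0$, not segmenting (the segmentation placing all mass on $\mu^*$) is not optimal: there exists a segmentation of $\mu^*$ giving the monopolist a strictly higher net payoff, so the monopolist always chooses to segment the market.
   Context: A monopolist with zero marginal cost sells one good to a unit mass of consumers with valuations in $\Omega$. A market is a probability vector $\mu=(\mu_1,\dots,\mu_K)$, $\mu_i$ the share of consumers with valuation $\omega_i$. Let $s(p,\omega)=p$ if $\omega\ge p$ and $0$ otherwise; in each market $\mu$ the monopolist charges $p^*(\mu)\in\arg\max_p\sum_i s(p,\omega_i)\mu_i$, and $\mathcal{M}_j$ denotes the set of markets in which $\omega_j$ is an optimal price. A segmentation of $\mu^*$ is a finitely supported probability distribution $\tau$ over markets with $\sum_{\mu^s\in\mathrm{supp}\,\tau}\tau(\mu^s)\mu^s=\mu^*$. With Shannon entropy $H(\mu)=-\sum_i\mu_i\ln\mu_i$ ($0\ln0=0$), the cost of $\tau$ is $c(\tau;\mu^*,k)=k\,[H(\mu^* )-\mathbb{E}_\tau H(\mu^s)]$, and the monopolist's net payoff from $\tau$ is $\mathbb{E}_\tau\big[\sum_i s(p^*(\mu^s),\omega_i)\mu^s_i\big]-c(\tau;\mu^*,k)$. *)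

theory Defs
  imports Complex_Main
begin

(* Valuations are indexed 0..K-1: omega 0 < ... < omega (K-1). *)

definition s_fun :: "real \<Rightarrow> real \<Rightarrow> real" where
  "s_fun p w = (if w \<ge> p then p else 0)"

definition is_market :: "nat \<Rightarrow> (nat \<Rightarrow> real) \<Rightarrow> bool" where
  "is_market K \<mu> \<longleftrightarrow> (\<forall>i<K. \<mu> i \<ge> 0) \<and> (\<forall>i\<ge>K. \<mu> i = 0) \<and> (\<Sum>i<K. \<mu> i) = 1"

definition revenue :: "(nat \<Rightarrow> real) \<Rightarrow> nat \<Rightarrow> real \<Rightarrow> (nat \<Rightarrow> real) \<Rightarrow> real" where
  "revenue \<omega> K p \<mu> = (\<Sum>i<K. s_fun p (\<omega> i) * \<mu> i)"

definition p_star :: "(nat \<Rightarrow> real) \<Rightarrow> nat \<Rightarrow> (nat \<Rightarrow> real) \<Rightarrow> real" where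
  "p_star \<omega> K \<mu> = (SOME p. \<forall>q. revenue \<omega> K q \<mu> \<le> revenue \<omega> K p \<mu>)"

definition M_set :: "(nat \<Rightarrow> real) \<Rightarrow> nat \<Rightarrow> nat \<Rightarrow> (nat \<Rightarrow> real) set" where
  "M_set \<omega> K j = {\<mu>. is_market K \<mu> \<and> (\<forall>p. revenue \<omega> K p \<mu> \<le> revenue \<omega> K (\<omega> j) \<mu>)}"

definition supp :: "((nat \<Rightarrow> real) \<Rightarrow> real) \<Rightarrow> (nat \<Rightarrow> real) set" where
  "supp \<tau> = {m. \<tau> m \<noteq> 0}"

definition is_segmentation :: "nat \<Rightarrow> (nat \<Rightarrow> real) \<Rightarrow> ((nat \<Rightarrow> real) \<Rightarrow> real) \<Rightarrow> bool" where
  "is_segmentation K \<mu> \<tau> \<longleftrightarrow>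
     finite (supp \<tau>) \<and> (\<forall>m. \<tau> m \<ge> 0) \<and> (\<Sum>m\<in>supp \<tau>. \<tau> m) = 1 \<and>
     (\<forall>m\<in>supp \<tau>. is_market K m) \<and>
     (\<forall>i<K. (\<Sum>m\<in>supp \<tau>. \<tau> m * m i) = \<mu> i)"

(* Shannon entropy; note ln 0 = 0 in Isabelle, so 0 ln 0 = 0 *)
definition entropy :: "nat \<Rightarrow> (nat \<Rightarrow> real) \<Rightarrow> real" where
  "entropy K \<mu> = - (\<Sum>i<K. \<mu> i * ln (\<mu> i))"

definition cost :: "nat \<Rightarrow> ((nat \<Rightarrow> real) \<Rightarrow> real) \<Rightarrow> (nat \<Rightarrow> real) \<Rightarrow> real \<Rightarrow> real" where
  "cost K \<tau> \<mu> k = k * (entropy K \<mu> - (\<Sum>m\<in>supp \<tau>. \<tau> m * entropy K m))"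

definition net_payoff :: "(nat \<Rightarrow> real) \<Rightarrow> nat \<Rightarrow> ((nat \<Rightarrow> real) \<Rightarrow> real) \<Rightarrow> (nat \<Rightarrow> real) \<Rightarrow> real \<Rightarrow> real" where
  "net_payoff \<omega> K \<tau> \<mu> k =
     (\<Sum>m\<in>supp \<tau>. \<tau> m * revenue \<omega> K (p_star \<omega> K m) m) - cost K \<tau> \<mu> k"

definition no_seg :: "(nat \<Rightarrow> real) \<Rightarrow> (nat \<Rightarrow> real) \<Rightarrow> real" where
  "no_seg \<mu> = (\<lambda>m. if m = \<mu> then 1 else 0)"

end

theory Submission
  imports Defs
begin

text \<open>
  Indifference between \<open>\<omega> r\<close> and \<open>\<omega> s\<close> forces positive mass at some valuation \<open>\<omega> a\<close> with
  \<open>r \<le> a < s\<close> and at some \<open>\<omega> b\<close> with \<open>s \<le> b\<close>. Moving mass \<open>\<epsilon>\<close> from \<open>b\<close> to \<open>a\<close>, and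
  separately from \<open>a\<close> to \<open>b\<close>, yields two markets whose average is \<open>\<mu>\<close>. In the first, the
  price \<open>\<omega> r\<close> still earns the common optimal revenue \<open>R\<close>, since its buyers are unchanged;
  in the second, the price \<open>\<omega> s\<close> earns \<open>R + \<epsilon> \<omega> s\<close>. Splitting the market evenly
  between them therefore gains at least \<open>\<epsilon> \<omega> s / 2\<close> in revenue. The entropy cost is only
  \<open>O(\<epsilon>\<^sup>2)\<close>: by \<open>ln x \<le> x - 1\<close>, the second difference of \<open>x ln x\<close> at \<open>x > 0\<close> is at most
  \<open>2 \<epsilon>\<^sup>2 / x\<close>. So, whatever the cost level \<open>k\<close>, a small enough \<open>\<epsilon>\<close> makes segmenting profitable.
\<close>

abbreviation optimal_revenue :: "(nat \<Rightarrow> real) \<Rightarrow> nat \<Rightarrow> (nat \<Rightarrow> real) \<Rightarrow> real" where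
  "optimal_revenue \<omega> K m \<equiv> revenue \<omega> K (p_star \<omega> K m) m"

lemma is_market_pos: "is_market K m \<Longrightarrow> 0 < K"
  by (rule ccontr) (simp add: is_market_def)

lemma revenue_nonneg:
  assumes "0 \<le> p" "\<forall>i<K. 0 \<le> m i"
  shows "0 \<le> revenue \<omega> K p m"
  unfolding revenue_def s_fun_def using assms by (auto intro!: sum_nonneg)

text \<open>An optimal price can be sought among the valuations: raising a price to the lowest
  valuation above it loses no buyer.\<close>

lemma revenue_mono_price:
  assumes "q \<le> p" "\<forall>i<K. q \<le> \<omega> i \<longrightarrow> p \<le> \<omega> i" "\<forall>i<K. 0 \<le> m i"
  shows "revenue \<omega> K q m \<le> revenue \<omega> K p m"
  unfolding revenue_def s_fun_def using assms by (auto intro!: sum_mono mult_right_mono)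

lemma exists_optimal_price:
  assumes "0 < K" "\<forall>i<K. 0 \<le> \<omega> i" "\<forall>i<K. 0 \<le> m i"
  shows "\<exists>p. \<forall>q. revenue \<omega> K q m \<le> revenue \<omega> K p m"
proof -
  define rev where "rev p = revenue \<omega> K p m" for p
  have "finite (\<omega> ` {..<K})" "\<omega> ` {..<K} \<noteq> {}"
    using assms(1) by auto
  then have "Max (rev ` \<omega> ` {..<K}) \<in> rev ` \<omega> ` {..<K}"
    by simp
  then obtain j where j: "j < K" "rev (\<omega> j) = Max (rev ` \<omega> ` {..<K})"
    by auto
  have j_max: "rev (\<omega> i) \<le> rev (\<omega> j)" if "i < K" for i
    using j that by simp
  have "rev q \<le> rev (\<omega> j)" for q
  proof (cases "\<exists>i<K. q \<le> \<omega> i")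
    case True
    define A where "A = {i. i < K \<and> q \<le> \<omega> i}"
    have "finite (\<omega> ` A)" "\<omega> ` A \<noteq> {}"
      using True by (auto simp: A_def)
    then obtain l where "l \<in> A" "\<omega> l = Min (\<omega> ` A)"
      by (metis Min_in imageE)
    then have l: "l < K" "q \<le> \<omega> l" "\<And>i. i < K \<Longrightarrow> q \<le> \<omega> i \<Longrightarrow> \<omega> l \<le> \<omega> i"
      using \<open>finite (\<omega> ` A)\<close> by (auto simp: A_def)
    then have "rev q \<le> rev (\<omega> l)"
      unfolding rev_def using assms(3) by (intro revenue_mono_price) auto
    also have "\<dots> \<le> rev (\<omega> j)"
      using j_max l by simp
    finally show ?thesis .
  next
    case False
    then have "rev q = 0"
      unfolding rev_def revenue_def s_fun_def by (auto intro!: sum.neutral)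
    also have "0 \<le> rev (\<omega> j)"
      unfolding rev_def using assms j by (intro revenue_nonneg) auto
    finally show ?thesis .
  qed
  then show ?thesis
    unfolding rev_def by blast
qed

lemma revenue_le_optimal_revenue:
  assumes "is_market K m" "\<forall>i<K. 0 \<le> \<omega> i"
  shows "revenue \<omega> K q m \<le> optimal_revenue \<omega> K m"
proof -
  have "0 < K" "\<forall>i<K. 0 \<le> m i"
    using assms(1) is_market_pos by (auto simp: is_market_def)
  from someI_ex[OF exists_optimal_price[OF this(1) assms(2) this(2)]] show ?thesis
    unfolding p_star_def by blast
qed

lemma optimal_revenue_if_in_M_set:
  assumes "m \<in> M_set \<omega> K j" "\<forall>i<K. 0 \<le> \<omega> i"
  shows "optimal_revenue \<omega> K m = revenue \<omega> K (\<omega> j) m"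
proof -
  have market: "is_market K m" and opt: "\<forall>p. revenue \<omega> K p m \<le> revenue \<omega> K (\<omega> j) m"
    using assms(1) by (auto simp: M_set_def)
  have "revenue \<omega> K (\<omega> j) m \<le> optimal_revenue \<omega> K m"
    using market assms(2) by (rule revenue_le_optimal_revenue)
  with opt show ?thesis
    by (meson order.antisym)
qed

lemma revenue_at_valuation:
  assumes mono: "strict_mono_on {..<K} \<omega>" and "j < K"
  shows "revenue \<omega> K (\<omega> j) m = \<omega> j * (\<Sum>i=j..<K. m i)"
proof -
  have "revenue \<omega> K (\<omega> j) m = (\<Sum>i<K. if j \<le> i then \<omega> j * m i else 0)"
    unfolding revenue_def s_fun_def using strict_mono_on_less_eq[OF mono] assms(2)
    by (intro sum.cong) auto
  also have "\<dots> = (\<Sum>i\<in>{i\<in>{..<K}. j \<le> i}. \<omega> j * m i)"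
    by (rule sum.inter_filter[symmetric]) simp
  also have "{i\<in>{..<K}. j \<le> i} = {j..<K}"
    by auto
  finally show ?thesis
    by (simp add: sum_distrib_left)
qed

lemma revenue_at_lowest_valuation:
  assumes "strict_mono_on {..<K} \<omega>" "is_market K m"
  shows "revenue \<omega> K (\<omega> 0) m = \<omega> 0"
  using revenue_at_valuation[OF assms(1), of 0 m] assms(2) is_market_pos[OF assms(2)]
  by (simp add: is_market_def atLeast0LessThan)

lemma indifference_positive_masses:
  assumes mono: "strict_mono_on {..<K} \<omega>" and rs: "r < s" "s < K"
    and nonneg: "\<forall>i<K. 0 \<le> m i"
    and indiff: "revenue \<omega> K (\<omega> r) m = revenue \<omega> K (\<omega> s) m"
    and nonzero: "revenue \<omega> K (\<omega> s) m \<noteq> 0"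
  obtains a b where "r \<le> a" "a < s" "0 < m a" "s \<le> b" "b < K" "0 < m b"
proof -
  have upper: "(\<Sum>i=s..<K. m i) \<noteq> 0"
    using nonzero revenue_at_valuation[OF mono rs(2)] by simp
  then obtain b where "b \<in> {s..<K}" "m b \<noteq> 0"
    by (rule sum.not_neutral_contains_not_neutral)
  moreover have "(\<Sum>i=r..<s. m i) \<noteq> 0"
  proof
    assume "(\<Sum>i=r..<s. m i) = 0"
    then have "(\<Sum>i=r..<K. m i) = (\<Sum>i=s..<K. m i)"
      using sum.atLeastLessThan_concat[of r s K m] rs by simp
    then have "\<omega> r = \<omega> s"
      using indiff upper revenue_at_valuation[OF mono] rs by simp
    moreover have "\<omega> r < \<omega> s"
      using mono rs by (auto simp: strict_mono_on_def)
    ultimately show False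
      by simp
  qed
  then obtain a where "a \<in> {r..<s}" "m a \<noteq> 0"
    by (rule sum.not_neutral_contains_not_neutral)
  ultimately show ?thesis
    using that nonneg rs by (auto simp: less_le)
qed

lemma exists_small_pos:
  fixes x y w C :: real
  assumes "0 < x" "0 < y" "0 < w"
  obtains \<epsilon> where "0 < \<epsilon>" "\<epsilon> < x" "\<epsilon> < y" "C * \<epsilon> < w"
proof -
  have "((\<lambda>\<epsilon>. C * \<epsilon>) \<longlongrightarrow> 0) (at_right (0::real))"
    by (auto intro!: tendsto_eq_intros)
  then have "\<forall>\<^sub>F \<epsilon> in at_right 0. C * \<epsilon> < w"
    using assms(3) by (rule order_tendstoD(2))
  moreover have "\<forall>\<^sub>F \<epsilon> in at_right 0. \<epsilon> < x" "\<forall>\<^sub>F \<epsilon> in at_right 0. \<epsilon> < y"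
    using order_tendstoD(2)[OF tendsto_ident_at] assms(1,2) by blast+
  ultimately have "\<forall>\<^sub>F \<epsilon> in at_right 0. 0 < \<epsilon> \<and> \<epsilon> < x \<and> \<epsilon> < y \<and> C * \<epsilon> < w"
    using eventually_at_right_less[of 0] by eventually_elim auto
  then show ?thesis
    using eventually_happens'[OF trivial_limit_at_right_real] that by blast
qed

definition transfer :: "(nat \<Rightarrow> real) \<Rightarrow> nat \<Rightarrow> nat \<Rightarrow> real \<Rightarrow> nat \<Rightarrow> real" where
  "transfer \<mu> a b \<epsilon> = \<mu>(a := \<mu> a + \<epsilon>, b := \<mu> b - \<epsilon>)"

lemma sum_transfer:
  fixes g :: "real \<Rightarrow> real"
  assumes "finite S" "a \<noteq> b"
  shows "(\<Sum>i\<in>S. g (transfer \<mu> a b \<epsilon> i)) = (\<Sum>i\<in>S. g (\<mu> i))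
           + (if a \<in> S then g (\<mu> a + \<epsilon>) - g (\<mu> a) else 0)
           + (if b \<in> S then g (\<mu> b - \<epsilon>) - g (\<mu> b) else 0)"
proof -
  have "g (transfer \<mu> a b \<epsilon> i) = g (\<mu> i) + (if i = a then g (\<mu> a + \<epsilon>) - g (\<mu> a) else 0)
          + (if i = b then g (\<mu> b - \<epsilon>) - g (\<mu> b) else 0)" for i
    using assms(2) by (auto simp: transfer_def)
  then show ?thesis
    using assms(1) by (simp add: sum.distrib)
qed

lemma transfer_is_market:
  assumes "is_market K \<mu>" "a \<noteq> b" "a < K" "b < K" "- \<mu> a \<le> \<epsilon>" "\<epsilon> \<le> \<mu> b"
  shows "is_market K (transfer \<mu> a b \<epsilon>)"
  using assms sum_transfer[of "{..<K}" a b "\<lambda>x. x" \<mu> \<epsilon>]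
  by (auto simp: is_market_def transfer_def)

lemma transfer_opposite_neq:
  assumes "a \<noteq> b" "\<epsilon> \<noteq> 0"
  shows "transfer \<mu> a b \<epsilon> \<noteq> transfer \<mu> a b (- \<epsilon>)"
proof
  assume "transfer \<mu> a b \<epsilon> = transfer \<mu> a b (- \<epsilon>)"
  then have "transfer \<mu> a b \<epsilon> a = transfer \<mu> a b (- \<epsilon>) a"
    by simp
  with assms show False
    by (simp add: transfer_def)
qed

lemma revenue_transfer_at_valuation:
  assumes "strict_mono_on {..<K} \<omega>" "j < K" "a \<noteq> b" "a < K" "b < K"
  shows "revenue \<omega> K (\<omega> j) (transfer \<mu> a b \<epsilon>)
           = revenue \<omega> K (\<omega> j) \<mu> + \<omega> j * ((if j \<le> a then \<epsilon> else 0) - (if j \<le> b then \<epsilon> else 0))"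
  using assms sum_transfer[of "{j..<K}" a b "\<lambda>x. x" \<mu> \<epsilon>]
  by (simp add: revenue_at_valuation algebra_simps)

lemma entropy_transfer:
  assumes "a \<noteq> b" "a < K" "b < K"
  shows "entropy K (transfer \<mu> a b \<epsilon>) = entropy K \<mu>
           - ((\<mu> a + \<epsilon>) * ln (\<mu> a + \<epsilon>) - \<mu> a * ln (\<mu> a))
           - ((\<mu> b - \<epsilon>) * ln (\<mu> b - \<epsilon>) - \<mu> b * ln (\<mu> b))"
  using assms sum_transfer[of "{..<K}" a b "\<lambda>x. x * ln x" \<mu> \<epsilon>]
  by (simp add: entropy_def)

lemma xlnx_symmetric_difference_le:
  fixes a y :: real
  assumes "\<bar>y\<bar> < a"
  shows "(a + y) * ln (a + y) + (a - y) * ln (a - y) - 2 * (a * ln a) \<le> 2 * y\<^sup>2 / a"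
proof -
  have a: "0 < a"
    using assms by simp
  have ln_bound: "x * ln x - x * ln a \<le> x * (x / a - 1)" if "0 < x" for x
  proof -
    have "x * ln x - x * ln a = x * ln (x / a)"
      using that a by (simp add: ln_div algebra_simps)
    also have "\<dots> \<le> x * (x / a - 1)"
      using that a by (intro mult_left_mono ln_le_minus_one) auto
    finally show ?thesis .
  qed
  have "0 < a + y" "0 < a - y"
    using assms by auto
  moreover have "(a + y) * ((a + y) / a - 1) + (a - y) * ((a - y) / a - 1) = 2 * y\<^sup>2 / a"
    using a by (simp add: field_simps power2_eq_square)
  moreover have "(a + y) * ln a + (a - y) * ln a = 2 * (a * ln a)"
    by (simp add: algebra_simps)
  ultimately show ?thesis
    using ln_bound[of "a + y"] ln_bound[of "a - y"] by linarith
qed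

lemma entropy_loss_transfer_split_le:
  assumes "a \<noteq> b" "a < K" "b < K" "\<bar>\<epsilon>\<bar> < \<mu> a" "\<bar>\<epsilon>\<bar> < \<mu> b"
  shows "entropy K \<mu> - (entropy K (transfer \<mu> a b \<epsilon>) + entropy K (transfer \<mu> a b (- \<epsilon>))) / 2
           \<le> \<epsilon>\<^sup>2 * (1 / \<mu> a + 1 / \<mu> b)"
proof -
  define f :: "real \<Rightarrow> real" where "f x = x * ln x" for x
  have H: "entropy K (transfer \<mu> a b e) = entropy K \<mu> - (f (\<mu> a + e) - f (\<mu> a)) - (f (\<mu> b - e) - f (\<mu> b))"
    for e
    unfolding entropy_transfer[OF assms(1-3)] f_def ..
  have "entropy K \<mu> - (entropy K (transfer \<mu> a b \<epsilon>) + entropy K (transfer \<mu> a b (- \<epsilon>))) / 2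
      = ((f (\<mu> a + \<epsilon>) + f (\<mu> a - \<epsilon>) - 2 * f (\<mu> a)) + (f (\<mu> b + \<epsilon>) + f (\<mu> b - \<epsilon>) - 2 * f (\<mu> b))) / 2"
    unfolding H by (simp add: field_simps)
  also have "\<dots> \<le> (2 * \<epsilon>\<^sup>2 / \<mu> a + 2 * \<epsilon>\<^sup>2 / \<mu> b) / 2"
    unfolding f_def
    using xlnx_symmetric_difference_le[OF assms(4)] xlnx_symmetric_difference_le[OF assms(5)]
    by (intro divide_right_mono add_mono) auto
  also have "\<dots> = \<epsilon>\<^sup>2 * (1 / \<mu> a + 1 / \<mu> b)"
    by (simp add: field_simps)
  finally show ?thesis .
qed

definition two_point_seg :: "(nat \<Rightarrow> real) \<Rightarrow> (nat \<Rightarrow> real) \<Rightarrow> (nat \<Rightarrow> real) \<Rightarrow> real" where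
  "two_point_seg m1 m2 = (\<lambda>m. if m = m1 \<or> m = m2 then 1 / 2 else 0)"

lemma supp_two_point_seg: "m1 \<noteq> m2 \<Longrightarrow> supp (two_point_seg m1 m2) = {m1, m2}"
  by (auto simp: supp_def two_point_seg_def)

lemma is_segmentation_two_point_seg:
  assumes "m1 \<noteq> m2" "is_market K m1" "is_market K m2" "\<forall>i<K. (m1 i + m2 i) / 2 = \<mu> i"
  shows "is_segmentation K \<mu> (two_point_seg m1 m2)"
  unfolding is_segmentation_def supp_two_point_seg[OF assms(1)]
  using assms by (auto simp: two_point_seg_def)

lemma net_payoff_two_point_seg:
  assumes "m1 \<noteq> m2"
  shows "net_payoff \<omega> K (two_point_seg m1 m2) \<mu> k
           = (optimal_revenue \<omega> K m1 + optimal_revenue \<omega> K m2) / 2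
             - k * (entropy K \<mu> - (entropy K m1 + entropy K m2) / 2)"
  unfolding net_payoff_def cost_def supp_two_point_seg[OF assms]
  using assms by (simp add: two_point_seg_def field_simps)

lemma net_payoff_no_seg: "net_payoff \<omega> K (no_seg \<mu>) \<mu> k = optimal_revenue \<omega> K \<mu>"
proof -
  have "supp (no_seg \<mu>) = {\<mu>}"
    by (auto simp: supp_def no_seg_def)
  then show ?thesis
    by (simp add: net_payoff_def cost_def no_seg_def)
qed

lemma is_segmentation_transfer_split:
  assumes "is_market K \<mu>" "a \<noteq> b" "a < K" "b < K" "0 < \<epsilon>" "\<epsilon> \<le> \<mu> a" "\<epsilon> \<le> \<mu> b"
  shows "is_segmentation K \<mu> (two_point_seg (transfer \<mu> a b \<epsilon>) (transfer \<mu> a b (- \<epsilon>)))"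
proof (rule is_segmentation_two_point_seg)
  show "transfer \<mu> a b \<epsilon> \<noteq> transfer \<mu> a b (- \<epsilon>)"
    using assms(2,5) by (intro transfer_opposite_neq) auto
  show "is_market K (transfer \<mu> a b \<epsilon>)" "is_market K (transfer \<mu> a b (- \<epsilon>))"
    using assms by (auto intro: transfer_is_market)
  show "\<forall>i<K. (transfer \<mu> a b \<epsilon> i + transfer \<mu> a b (- \<epsilon>) i) / 2 = \<mu> i"
    by (simp add: transfer_def)
qed

lemma net_payoff_transfer_split_ge:
  assumes market: "is_market K \<mu>" and \<omega>_nonneg: "\<forall>i<K. 0 \<le> \<omega> i"
    and ab: "a \<noteq> b" "a < K" "b < K" and \<epsilon>: "0 < \<epsilon>" "\<epsilon> < \<mu> a" "\<epsilon> < \<mu> b" and "0 \<le> k"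
  shows "(revenue \<omega> K p (transfer \<mu> a b \<epsilon>) + revenue \<omega> K q (transfer \<mu> a b (- \<epsilon>))) / 2
           - k * (\<epsilon>\<^sup>2 * (1 / \<mu> a + 1 / \<mu> b))
         \<le> net_payoff \<omega> K (two_point_seg (transfer \<mu> a b \<epsilon>) (transfer \<mu> a b (- \<epsilon>))) \<mu> k"
proof -
  let ?m1 = "transfer \<mu> a b \<epsilon>" and ?m2 = "transfer \<mu> a b (- \<epsilon>)"
  have "is_market K ?m1" "is_market K ?m2"
    using assms by (auto intro!: transfer_is_market)
  then have "revenue \<omega> K p ?m1 \<le> optimal_revenue \<omega> K ?m1" "revenue \<omega> K q ?m2 \<le> optimal_revenue \<omega> K ?m2"
    using \<omega>_nonneg by (auto intro: revenue_le_optimal_revenue)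
  moreover have "k * (entropy K \<mu> - (entropy K ?m1 + entropy K ?m2) / 2) \<le> k * (\<epsilon>\<^sup>2 * (1 / \<mu> a + 1 / \<mu> b))"
    using assms by (intro mult_left_mono entropy_loss_transfer_split_le) auto
  ultimately have "(revenue \<omega> K p ?m1 + revenue \<omega> K q ?m2) / 2 - k * (\<epsilon>\<^sup>2 * (1 / \<mu> a + 1 / \<mu> b))
      \<le> (optimal_revenue \<omega> K ?m1 + optimal_revenue \<omega> K ?m2) / 2
        - k * (entropy K \<mu> - (entropy K ?m1 + entropy K ?m2) / 2)"
    by (intro diff_mono divide_right_mono add_mono) auto
  also have "\<dots> = net_payoff \<omega> K (two_point_seg ?m1 ?m2) \<mu> k"
    using ab(1) \<epsilon>(1) by (simp add: net_payoff_two_point_seg transfer_opposite_neq)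
  finally show ?thesis .
qed

theorem proposition2:
  fixes \<omega> :: "nat \<Rightarrow> real" and K :: nat and \<mu> :: "nat \<Rightarrow> real" and r s :: nat
  assumes pos: "0 < \<omega> 0"
    and incr: "\<And>i j. i < j \<Longrightarrow> j < K \<Longrightarrow> \<omega> i < \<omega> j"
    and rs: "r < s" "s < K"
    and Mr: "\<mu> \<in> M_set \<omega> K r" and Ms: "\<mu> \<in> M_set \<omega> K s"
  shows "\<forall>k::real. k \<ge> 0 \<longrightarrow>
           (\<exists>\<tau>. is_segmentation K \<mu> \<tau> \<and>
                 net_payoff \<omega> K \<tau> \<mu> k > net_payoff \<omega> K (no_seg \<mu>) \<mu> k)"
proof (intro allI impI)
  fix k :: real
  assume "0 \<le> k"
  have mono: "strict_mono_on {..<K} \<omega>"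
    using incr by (auto intro: strict_mono_onI)
  have \<omega>_nonneg: "\<forall>i<K. 0 \<le> \<omega> i"
    using pos strict_mono_on_leD[OF mono, of 0] by force
  have market: "is_market K \<mu>" and opt_s: "\<forall>p. revenue \<omega> K p \<mu> \<le> revenue \<omega> K (\<omega> s) \<mu>"
    using Ms by (auto simp: M_set_def)
  define R where "R = revenue \<omega> K (\<omega> s) \<mu>"
  have R: "optimal_revenue \<omega> K \<mu> = R" "revenue \<omega> K (\<omega> r) \<mu> = R"
    using optimal_revenue_if_in_M_set[OF Mr \<omega>_nonneg] optimal_revenue_if_in_M_set[OF Ms \<omega>_nonneg]
    by (simp_all add: R_def)
  have "0 < R"
    using opt_s pos revenue_at_lowest_valuation[OF mono market] by (metis R_def less_le_trans)
  moreover have "\<forall>i<K. 0 \<le> \<mu> i"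
    using market by (simp add: is_market_def)
  ultimately obtain a b where ab: "r \<le> a" "a < s" "0 < \<mu> a" "s \<le> b" "b < K" "0 < \<mu> b"
    using indifference_positive_masses[OF mono rs] R(2) R_def by (metis less_irrefl)
  have "0 < \<omega> s / 2"
    using strict_mono_on_leD[OF mono, of 0 s] pos rs by simp
  then obtain \<epsilon> where \<epsilon>: "0 < \<epsilon>" "\<epsilon> < \<mu> a" "\<epsilon> < \<mu> b" "k * (1 / \<mu> a + 1 / \<mu> b) * \<epsilon> < \<omega> s / 2"
    using exists_small_pos ab by metis
  define \<tau> where "\<tau> = two_point_seg (transfer \<mu> a b \<epsilon>) (transfer \<mu> a b (- \<epsilon>))"
  have "is_segmentation K \<mu> \<tau>"
    unfolding \<tau>_def using market ab rs \<epsilon> by (intro is_segmentation_transfer_split) auto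
  moreover have "net_payoff \<omega> K (no_seg \<mu>) \<mu> k
      < (R + (R + \<omega> s * \<epsilon>)) / 2 - k * (\<epsilon>\<^sup>2 * (1 / \<mu> a + 1 / \<mu> b))"
    using R(1) mult_strict_left_mono[OF \<epsilon>(4) \<epsilon>(1)]
    by (simp add: net_payoff_no_seg power2_eq_square field_simps)
  moreover have "\<dots> \<le> net_payoff \<omega> K \<tau> \<mu> k"
    using net_payoff_transfer_split_ge[OF market \<omega>_nonneg _ _ _ \<epsilon>(1-3) \<open>0 \<le> k\<close>, of "\<omega> r" "\<omega> s"]
      revenue_transfer_at_valuation[OF mono] R ab rs
    unfolding \<tau>_def R_def by simp
  ultimately show "\<exists>\<tau>. is_segmentation K \<mu> \<tau> \<and> net_payoff \<omega> K \<tau> \<mu> k > net_payoff \<omega> K (no_seg \<mu>) \<mu> k"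
    by force
qed

end
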